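(* Let $p$ be an odd prime and $G$ a finite non-abelian $p$-group with cyclic center. If $\Omega_1(Z(G))\not\le\gamma_3(G)G^p$, then $G$ has a non-inner automorphism of order $p$.
   Context: $\Omega_1(X)=\langle x\in X:x^p=1\rangle$, $\gamma_3(G)$ is the third term of the lower central series, $G^p=\langle g^p:g\in G\rangle$. *)

theory Defs
  imports "HOL-Algebra.Algebra"
begin

definition center :: "('a, 'b) monoid_scheme \<Rightarrow> 'a set" where
  "center G = {z \<in> carrier G. \<forall>g \<in> carrier G. z \<otimes>\<^bsub>G\<^esub> g = g \<otimes>\<^bsub>G\<^esub> z}"

definition comm_subgroup :: "('a, 'b) monoid_scheme \<Rightarrow> 'a set \<Rightarrow> 'a set \<Rightarrow> 'a set" where
  "comm_subgroup G A B = generate G (\<Union>a \<in> A. \<Union>b \<in> B.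
      {a \<otimes>\<^bsub>G\<^esub> b \<otimes>\<^bsub>G\<^esub> inv\<^bsub>G\<^esub> a \<otimes>\<^bsub>G\<^esub> inv\<^bsub>G\<^esub> b})"

fun lower_central :: "('a, 'b) monoid_scheme \<Rightarrow> nat \<Rightarrow> 'a set" where
  "lower_central G 0 = carrier G"
| "lower_central G (Suc 0) = carrier G"
| "lower_central G (Suc (Suc i)) = comm_subgroup G (lower_central G (Suc i)) (carrier G)"

definition power_subgroup :: "('a, 'b) monoid_scheme \<Rightarrow> nat \<Rightarrow> 'a set" where
  "power_subgroup G p = generate G {g [^]\<^bsub>G\<^esub> p | g. g \<in> carrier G}"

definition Omega1 :: "('a, 'b) monoid_scheme \<Rightarrow> nat \<Rightarrow> 'a set \<Rightarrow> 'a set" where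
  "Omega1 G p S = generate G {x \<in> S. x [^]\<^bsub>G\<^esub> p = \<one>\<^bsub>G\<^esub>}"

definition inner_auto :: "('a, 'b) monoid_scheme \<Rightarrow> ('a \<Rightarrow> 'a) \<Rightarrow> bool" where
  "inner_auto G \<phi> \<longleftrightarrow> (\<exists>g \<in> carrier G. \<forall>x \<in> carrier G.
      \<phi> x = g \<otimes>\<^bsub>G\<^esub> x \<otimes>\<^bsub>G\<^esub> inv\<^bsub>G\<^esub> g)"

end

theory Submission
  imports Defs
begin

(*
  Pick z in Omega_1(Z(G)) outside gamma_3(G) G^p. As z is not a p-th power, it generates the
  cyclic p-group Z(G), so |Z(G)| = p. Conjugation fixes some coset of Z(G) other than Z(G), since
  the number of fixed cosets is divisible by p; a representative a is noncentral with all
  commutators [a,x] central. Then a^p is central, and a^p = 1 because otherwise z would be a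
  power of a^p and so lie in G^p. Writing [a,x] = z^e(x), the map e is a homomorphism onto Z/p,
  and x |-> x a^e(x) z^(e(x)^2/2) is an automorphism of order p. Were it conjugation by g, then
  [[g,b],b] = z for any b with e(b) = 1, putting z in gamma_3(G).
*)

section \<open>The center and commutators\<close>

definition commutator :: "('a, 'b) monoid_scheme \<Rightarrow> 'a \<Rightarrow> 'a \<Rightarrow> 'a" where
  "commutator G x y = x \<otimes>\<^bsub>G\<^esub> y \<otimes>\<^bsub>G\<^esub> inv\<^bsub>G\<^esub> x \<otimes>\<^bsub>G\<^esub> inv\<^bsub>G\<^esub> y"

context group
begin

lemma inv_mult_cancel_left [simp]:
  "x \<in> carrier G \<Longrightarrow> y \<in> carrier G \<Longrightarrow> inv x \<otimes> (x \<otimes> y) = y"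
  by (simp flip: m_assoc)

lemma mult_inv_cancel_left [simp]:
  "x \<in> carrier G \<Longrightarrow> y \<in> carrier G \<Longrightarrow> x \<otimes> (inv x \<otimes> y) = y"
  by (simp flip: m_assoc)

lemma center_subset_carrier: "center G \<subseteq> carrier G"
  by (auto simp: center_def)

lemma center_in_carrier [dest]: "c \<in> center G \<Longrightarrow> c \<in> carrier G"
  by (auto simp: center_def)

lemma center_commute: "c \<in> center G \<Longrightarrow> g \<in> carrier G \<Longrightarrow> c \<otimes> g = g \<otimes> c"
  by (auto simp: center_def)

lemma center_commute_left:
  "c \<in> center G \<Longrightarrow> g \<in> carrier G \<Longrightarrow> h \<in> carrier G \<Longrightarrow> g \<otimes> (c \<otimes> h) = c \<otimes> (g \<otimes> h)"
  by (metis center_commute center_in_carrier m_assoc)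

lemma subgroup_center: "subgroup (center G) G"
proof (rule subgroupI)
  fix x y assume x: "x \<in> center G" and y: "y \<in> center G"
  then have xy: "x \<in> carrier G" "y \<in> carrier G" by auto
  show "x \<otimes> y \<in> center G"
    unfolding center_def
  proof (intro CollectI conjI ballI)
    fix g assume g: "g \<in> carrier G"
    have "x \<otimes> y \<otimes> g = x \<otimes> (g \<otimes> y)" using x y g xy by (simp add: m_assoc center_commute)
    also have "\<dots> = g \<otimes> (x \<otimes> y)" using x g xy by (simp add: center_commute flip: m_assoc)
    finally show "x \<otimes> y \<otimes> g = g \<otimes> (x \<otimes> y)" .
  qed (use xy in simp)
  show "inv x \<in> center G"
    unfolding center_def
  proof (intro CollectI conjI ballI)
    fix g assume g: "g \<in> carrier G"
    have "inv x \<otimes> g = inv x \<otimes> (g \<otimes> x) \<otimes> inv x" using xy g by (simp add: m_assoc)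
    also have "\<dots> = g \<otimes> inv x" using center_commute[OF x g, symmetric] xy g by (simp add: m_assoc)
    finally show "inv x \<otimes> g = g \<otimes> inv x" .
  qed (use xy in simp)
next
  show "center G \<noteq> {}"
    using one_closed by (auto simp: center_def)
qed (rule center_subset_carrier)

lemma commutator_closed [simp]:
  "x \<in> carrier G \<Longrightarrow> y \<in> carrier G \<Longrightarrow> commutator G x y \<in> carrier G"
  by (simp add: commutator_def)

lemma commutator_eq_one_iff:
  assumes "x \<in> carrier G" "y \<in> carrier G"
  shows "commutator G x y = \<one> \<longleftrightarrow> x \<otimes> y = y \<otimes> x"
proof
  assume "commutator G x y = \<one>"
  then have "x \<otimes> y \<otimes> inv x \<otimes> inv y \<otimes> (y \<otimes> x) = y \<otimes> x" using assms by (simp add: commutator_def)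
  then show "x \<otimes> y = y \<otimes> x" using assms by (simp add: m_assoc)
qed (use assms in \<open>simp add: commutator_def m_assoc\<close>)

lemma center_iff_commutators_trivial:
  "x \<in> center G \<longleftrightarrow> x \<in> carrier G \<and> (\<forall>g\<in>carrier G. commutator G x g = \<one>)"
  using commutator_eq_one_iff by (auto simp: center_def)

lemma inv_commutator:
  "x \<in> carrier G \<Longrightarrow> y \<in> carrier G \<Longrightarrow> inv (commutator G x y) = commutator G y x"
  by (simp add: commutator_def inv_mult_group m_assoc)

lemma mult_eq_commutator_mult:
  "x \<in> carrier G \<Longrightarrow> y \<in> carrier G \<Longrightarrow> x \<otimes> y = commutator G x y \<otimes> y \<otimes> x"
  by (simp add: commutator_def m_assoc)

lemma commutator_mult_commuting_right:
  assumes a: "a \<in> carrier G" and x: "x \<in> carrier G" and w: "w \<in> carrier G"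
    and wa: "w \<otimes> a = a \<otimes> w"
  shows "commutator G a (x \<otimes> w) = commutator G a x"
proof -
  have "w \<otimes> inv a \<otimes> inv w = inv a \<otimes> (a \<otimes> w) \<otimes> inv a \<otimes> inv w"
    using a w by (simp add: m_assoc)
  also have "\<dots> = inv a"
    using a w by (simp add: m_assoc flip: wa)
  finally have "w \<otimes> inv a \<otimes> inv w = inv a" .
  moreover have "commutator G a (x \<otimes> w) = a \<otimes> x \<otimes> (w \<otimes> inv a \<otimes> inv w) \<otimes> inv x"
    using a x w by (simp add: commutator_def inv_mult_group m_assoc)
  ultimately show ?thesis
    by (simp add: commutator_def)
qed

lemma pow_mult_central_commutator:
  assumes a: "a \<in> carrier G" and y: "y \<in> carrier G" and c: "commutator G a y \<in> center G"
  shows "a [^] (j::nat) \<otimes> y = commutator G a y [^] j \<otimes> y \<otimes> a [^] j"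
proof (induction j)
  case (Suc j)
  let ?c = "commutator G a y"
  have "a [^] Suc j \<otimes> y = a [^] j \<otimes> (?c \<otimes> (y \<otimes> a))"
    using a y by (simp add: m_assoc mult_eq_commutator_mult[of a y])
  also have "\<dots> = ?c \<otimes> (a [^] j \<otimes> y) \<otimes> a"
    using center_commute_left[OF c, of "a [^] j" "y \<otimes> a"] a y by (simp add: m_assoc)
  also have "\<dots> = (?c \<otimes> ?c [^] j) \<otimes> y \<otimes> (a [^] j \<otimes> a)"
    using a y by (simp add: Suc m_assoc del: nat_pow_Suc)
  also have "\<dots> = ?c [^] Suc j \<otimes> y \<otimes> a [^] Suc j"
    using a y by (simp add: nat_pow_Suc2[symmetric])
  finally show ?case .
qed (use y in simp)

lemma commutator_pow_left:
  assumes "a \<in> carrier G" "y \<in> carrier G" "commutator G a y \<in> center G"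
  shows "commutator G (a [^] (j::nat)) y = commutator G a y [^] j"
  using pow_mult_central_commutator[OF assms, of j] assms by (simp add: commutator_def m_assoc)

lemma commutator_mult_right:
  assumes a: "a \<in> carrier G" and x: "x \<in> carrier G" and y: "y \<in> carrier G"
    and c: "commutator G a y \<in> center G"
  shows "commutator G a (x \<otimes> y) = commutator G a y \<otimes> commutator G a x"
proof -
  have "commutator G a (x \<otimes> y) = a \<otimes> x \<otimes> inv a \<otimes> (commutator G a y \<otimes> inv x)"
    using a x y by (simp add: commutator_def m_assoc inv_mult_group)
  also have "\<dots> = commutator G a y \<otimes> commutator G a x"
    using center_commute_left[OF c, of "a \<otimes> x \<otimes> inv a" "inv x"] a x y
    by (simp add: commutator_def m_assoc)
  finally show ?thesis .
qed

lemma commutator_pow_right: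
  assumes a: "a \<in> carrier G" and x: "x \<in> carrier G" and c: "commutator G a x \<in> center G"
  shows "commutator G a (x [^] (k::nat)) = commutator G a x [^] k"
proof (induction k)
  case (Suc k)
  then show ?case
    using commutator_mult_right[OF a _ x c, of "x [^] k"] a x by (simp add: nat_pow_Suc2[symmetric])
qed (use a in \<open>simp add: commutator_def\<close>)

lemma center_nat_pow_closed:
  "c \<in> center G \<Longrightarrow> c [^] (n::nat) \<in> center G"
  using subgroup_int_pow_closed[OF subgroup_center, of c "int n"] by (simp add: int_pow_int)

lemma commutator_mult_central_left:
  assumes "a \<in> carrier G" "y \<in> carrier G" "c \<in> center G"
  shows "commutator G (a \<otimes> c) y = commutator G a y"
proof -
  have c: "c \<in> carrier G" using assms(3) by auto
  have "commutator G (a \<otimes> c) y = a \<otimes> (c \<otimes> y) \<otimes> inv c \<otimes> inv a \<otimes> inv y"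
    using assms c by (simp add: commutator_def inv_mult_group m_assoc)
  also have "\<dots> = a \<otimes> (y \<otimes> c) \<otimes> inv c \<otimes> inv a \<otimes> inv y"
    by (simp add: center_commute[OF assms(3) assms(2)])
  also have "\<dots> = commutator G a y"
    using assms c by (simp add: commutator_def m_assoc)
  finally show ?thesis .
qed

lemma commutator_commutator_of_conj_eq:
  assumes "g \<in> carrier G" "b \<in> carrier G" "w \<in> carrier G" "g \<otimes> b \<otimes> inv g = b \<otimes> w"
  shows "commutator G (commutator G g b) b = b \<otimes> commutator G w b \<otimes> inv b"
proof -
  have "commutator G g b = b \<otimes> w \<otimes> inv b"
    using assms(4) by (simp add: commutator_def)
  then show ?thesis
    using assms(1-3) by (simp add: commutator_def inv_mult_group m_assoc)
qed
lemma pow_mem_center_of_central_commutators: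
  assumes t: "t \<in> carrier G" and comm: "\<forall>g\<in>carrier G. commutator G t g \<in> center G"
    and exp: "\<forall>c\<in>center G. c [^] k = \<one>"
  shows "t [^] (k::nat) \<in> center G"
  unfolding center_iff_commutators_trivial
  using t comm exp commutator_pow_left[OF t] by simp

end

section \<open>Cyclic groups of prime power order\<close>

context group
begin

lemma finite_carrier_of_order_prime_power:
  "order G = p ^ n \<Longrightarrow> Factorial_Ring.prime p \<Longrightarrow> finite (carrier G)"
  by (metis order_gt_0_iff_finite prime_gt_0_nat zero_less_power)

lemma pow_eq_iff_mod_ord:
  assumes "x \<in> carrier G"
  shows "x [^] (m::nat) = x [^] n \<longleftrightarrow> m mod ord x = n mod ord x"
proof -
  have "m mod ord x = n mod ord x \<longleftrightarrow> int (ord x) dvd int n - int m"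
    by (metis mod_eq_dvd_iff of_nat_eq_iff of_nat_mod)
  then show ?thesis
    using int_pow_eq[OF assms, of "int m" "int n"] by (simp add: int_pow_int)
qed

lemma cyclic_prime_power_group_pth_power_or_generator:
  assumes cyc: "cyclic_group G" and ord: "order G = p ^ n" and p: "Factorial_Ring.prime p"
    and w: "w \<in> carrier G"
  shows "(\<exists>c\<in>carrier G. w = c [^] p) \<or> (\<forall>y\<in>carrier G. \<exists>i::nat. y = w [^] i)"
proof -
  have fin: "finite (carrier G)"
    by (rule finite_carrier_of_order_prime_power[OF ord p])
  obtain \<zeta> where \<zeta>: "\<zeta> \<in> carrier G" and gen: "generate G {\<zeta>} = carrier G"
    using cyc by (auto simp: cyclic_group_def carrier_subgroup_generated dest: arg_cong[of _ _ carrier])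
  have "w \<in> generate G {\<zeta>}" using w gen by simp
  then obtain k :: nat where k: "w = \<zeta> [^] k"
    using generate_pow_on_finite_carrier[OF fin \<zeta>] by blast
  have ord_\<zeta>: "ord \<zeta> = p ^ n"
    using generate_pow_card[OF \<zeta>] gen ord by (simp add: order_def)
  show ?thesis
  proof (cases "p dvd k")
    case True
    then obtain m where "k = p * m" by (rule dvdE)
    then have "w = (\<zeta> [^] m) [^] p" using k \<zeta> by (simp add: nat_pow_pow mult.commute)
    then show ?thesis using \<zeta> by blast
  next
    case False
    then have "coprime k (ord \<zeta>)"
      using prime_imp_coprime_nat[OF p False] by (simp add: ord_\<zeta> coprime_commute)
    then have "ord w = ord \<zeta>"
      using pow_ord_eq_ord_iff[OF fin \<zeta>] k by simp
    then have "card (generate G {w}) = card (carrier G)"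
      using generate_pow_card[OF \<zeta>] generate_pow_card[OF w] gen by simp
    then have "generate G {w} = carrier G"
      using fin w by (metis card_subset_eq empty_subsetI generate_incl insert_subset)
    then show ?thesis
      using generate_pow_on_finite_carrier[OF fin w] by blast
  qed
qed

lemma center_pth_power_or_generator:
  assumes cyc: "cyclic_group (subgroup_generated G (center G))"
    and ord: "order G = p ^ n" and p: "Factorial_Ring.prime p" and w: "w \<in> center G"
  shows "(\<exists>c\<in>center G. w = c [^] p) \<or> (\<forall>y\<in>center G. \<exists>i::nat. y = w [^] i)"
proof -
  let ?Z = "subgroup_generated G (center G)"
  interpret Z: group ?Z by simp
  have carrier_Z: "carrier ?Z = center G"
    by (rule subgroup.carrier_subgroup_generated_subgroup[OF subgroup_center])
  have "card (center G) dvd p ^ n"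
    using lagrange[OF subgroup_center] ord by (metis dvd_triv_right)
  then obtain m where "order ?Z = p ^ m"
    using divides_primepow_nat[OF p] carrier_Z by (auto simp: order_def)
  from Z.cyclic_prime_power_group_pth_power_or_generator[OF cyc this p] show ?thesis
    using w carrier_Z by (simp add: pow_subgroup_generated)
qed

end

section \<open>Noncentral elements with central commutators\<close>

lemma prime_dvd_of_dvd_prime_power:
  fixes p d :: nat
  assumes "Factorial_Ring.prime p" "d dvd p ^ n" "d \<noteq> 1"
  shows "p dvd d"
  using assms by (metis divides_primepow_nat dvd_power le_zero_eq not_gr_zero power_0)

lemma (in group_action) prime_dvd_card_non_fixed_points:
  assumes ord: "order G = p ^ n" and p: "Factorial_Ring.prime p"
    and F: "finite F" "F \<subseteq> E" and inv: "\<And>g x. g \<in> carrier G \<Longrightarrow> x \<in> F \<Longrightarrow> \<phi> g x \<in> F"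
  shows "p dvd card {x \<in> F. \<exists>g\<in>carrier G. \<phi> g x \<noteq> x}" (is "p dvd card ?M")
proof -
  have orbit_F: "orbit G \<phi> x \<subseteq> F" if "x \<in> F" for x
    using inv that by (auto simp: orbit_def)
  have "?M = \<Union> (orbit G \<phi> ` ?M)"
  proof
    show "?M \<subseteq> \<Union> (orbit G \<phi> ` ?M)"
    proof
      fix x assume "x \<in> ?M"
      then show "x \<in> \<Union> (orbit G \<phi> ` ?M)"
        using orbit_refl[of x] F(2) by auto
    qed
    show "\<Union> (orbit G \<phi> ` ?M) \<subseteq> ?M"
    proof clarify
      fix x y g assume x: "x \<in> F" and g: "g \<in> carrier G" "\<phi> g x \<noteq> x" and y: "y \<in> orbit G \<phi> x"
      have "y \<in> F" using orbit_F[OF x] y by blast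
      moreover have "x \<in> orbit G \<phi> y" using orbit_sym y x \<open>y \<in> F\<close> F(2) by blast
      then obtain h where h: "h \<in> carrier G" "x = \<phi> h y" by (auto simp: orbit_def)
      have "\<exists>g\<in>carrier G. \<phi> g y \<noteq> y"
      proof (rule ccontr)
        assume fixed: "\<not> ?thesis"
        then have "x = y" using h by auto
        then show False using g fixed by auto
      qed
      ultimately show "y \<in> F \<and> (\<exists>g\<in>carrier G. \<phi> g y \<noteq> y)" by blast
    qed
  qed
  moreover have "p dvd card (orbit G \<phi> x)" if x: "x \<in> ?M" for x
  proof (rule prime_dvd_of_dvd_prime_power[OF p])
    have "x \<in> E" using x F(2) by auto
    then have "card (orbit G \<phi> x) * card (stabilizer G \<phi> x) = p ^ n"
      using orbit_stabilizer_theorem ord by simp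
    then show "card (orbit G \<phi> x) dvd p ^ n"
      by (metis dvd_triv_left)
    obtain g where "g \<in> carrier G" "\<phi> g x \<noteq> x" using x by blast
    then have "{x, \<phi> g x} \<subseteq> orbit G \<phi> x"
      using orbit_refl x F(2) by (auto simp: orbit_def)
    then have "card {x, \<phi> g x} \<le> card (orbit G \<phi> x)"
      using finite_subset[OF orbit_F F(1)] x by (intro card_mono) auto
    then show "card (orbit G \<phi> x) \<noteq> 1"
      using \<open>\<phi> g x \<noteq> x\<close> by simp
  qed
  moreover have "finite (\<Union> (orbit G \<phi> ` ?M))"
    using orbit_F by (intro finite_subset[OF _ F(1)]) auto
  moreover have "orbit G \<phi> x \<inter> orbit G \<phi> y = {}"
    if "orbit G \<phi> x \<noteq> orbit G \<phi> y" "x \<in> ?M" "y \<in> ?M" for x y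
    using disjoint_union[of "orbit G \<phi> x" "orbit G \<phi> y"] that F(2) by (auto simp: orbits_def)
  ultimately show ?thesis
    using dvd_partition[of "orbit G \<phi> ` ?M" p] by auto
qed

lemma (in group_action) exists_other_fixed_point:
  assumes "order G = p ^ n" "Factorial_Ring.prime p"
    and F: "finite F" "F \<subseteq> E" "\<And>g x. g \<in> carrier G \<Longrightarrow> x \<in> F \<Longrightarrow> \<phi> g x \<in> F"
    and dvd: "p dvd card F" and x0: "x0 \<in> F" "\<forall>g\<in>carrier G. \<phi> g x0 = x0"
  shows "\<exists>x\<in>F. x \<noteq> x0 \<and> (\<forall>g\<in>carrier G. \<phi> g x = x)"
proof (rule ccontr)
  assume "\<not> ?thesis"
  then have "{x \<in> F. \<exists>g\<in>carrier G. \<phi> g x \<noteq> x} = F - {x0}"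
    using x0 by auto
  then have "p dvd card F - 1"
    using prime_dvd_card_non_fixed_points[OF assms(1-2) F] x0(1) F(1) by simp
  then have "p dvd 1"
    by (rule dvd_diffD1[OF _ dvd]) (use x0(1) F(1) in \<open>auto simp: Suc_le_eq card_gt_0_iff\<close>)
  then show False using assms(2) by simp
qed

context group
begin

lemma normal_center: "center G \<lhd> G"
  unfolding normal_inv_iff
proof (intro conjI ballI subgroup_center)
  fix x h assume x: "x \<in> carrier G" and h: "h \<in> center G"
  have "x \<otimes> h \<otimes> inv x = h \<otimes> x \<otimes> inv x"
    by (simp add: center_commute[OF h x])
  also have "\<dots> = h"
    using x center_in_carrier[OF h] by (simp add: m_assoc)
  finally show "x \<otimes> h \<otimes> inv x \<in> center G"
    using h by simp
qed

lemma prime_dvd_card_rcosets: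
  assumes ord: "order G = p ^ n" and p: "Factorial_Ring.prime p"
    and H: "subgroup H G" "H \<noteq> carrier G"
  shows "p dvd card (rcosets H)"
proof (rule prime_dvd_of_dvd_prime_power[OF p])
  show "card (rcosets H) dvd p ^ n"
    using lagrange[OF H(1)] ord by (metis dvd_triv_left)
  have "finite (carrier G)"
    by (rule finite_carrier_of_order_prime_power[OF ord p])
  moreover have "card H \<noteq> card (carrier G)"
    using H subgroup.subset calculation by (metis card_subset_eq)
  ultimately show "card (rcosets H) \<noteq> 1"
    using lagrange[OF H(1)] by (auto simp: order_def)
qed

end

lemma (in normal) conj_rcoset:
  assumes "g \<in> carrier G" "t \<in> carrier G"
  shows "g <# (H #> t) #> inv g = H #> (g \<otimes> t \<otimes> inv g)"
proof -
  have "g <# (H #> t) = (H #> g) #> t"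
    using assms by (simp add: coset_assoc subset flip: coset_eq)
  then show ?thesis
    using assms by (simp add: coset_mult_assoc subset)
qed

lemma (in normal) commutator_mem_of_conj_rcoset_eq:
  assumes g: "g \<in> carrier G" and t: "t \<in> carrier G" and fixed: "g <# (H #> t) #> inv g = H #> t"
  shows "commutator G g t \<in> H"
proof -
  have "g \<otimes> t \<otimes> inv g \<in> H #> t"
    using repr_independenceD[OF is_subgroup _ fixed[unfolded conj_rcoset[OF g t], symmetric]] g t by simp
  then show ?thesis
    using rcos_module_imp[OF is_group t] g t by (simp add: commutator_def)
qed

lemma (in normal) exists_nontrivial_rcoset_fixed_by_conj:
  assumes ord: "order G = p ^ n" and p: "Factorial_Ring.prime p" and proper: "H \<noteq> carrier G"
  shows "\<exists>t\<in>carrier G. t \<notin> H \<and> (\<forall>g\<in>carrier G. g <# (H #> t) #> inv g = H #> t)"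
proof -
  let ?\<phi> = "\<lambda>g. \<lambda>K\<in>{K. K \<subseteq> carrier G}. g <# K #> inv g"
  interpret conj: group_action G "{K. K \<subseteq> carrier G}" ?\<phi>
    by (rule action_by_conjugation_on_power_set)
  have conj_coset: "?\<phi> g (H #> t) = H #> (g \<otimes> t \<otimes> inv g)" if "g \<in> carrier G" "t \<in> carrier G" for g t
    using conj_rcoset that r_coset_subset_G[OF subset] by simp
  have dvd: "p dvd card (rcosets H)"
    by (rule prime_dvd_card_rcosets[OF ord p is_subgroup proper])
  have fin: "finite (rcosets H)"
    using finite_carrier_of_order_prime_power[OF ord p] rcosets_subset_PowG[OF is_subgroup]
    by (meson finite_Pow_iff finite_subset)
  have sub: "rcosets H \<subseteq> {K. K \<subseteq> carrier G}"
    using rcosets_subset_PowG[OF is_subgroup] by auto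
  have inv: "?\<phi> g K \<in> rcosets H" if g: "g \<in> carrier G" and K: "K \<in> rcosets H" for g K
  proof -
    obtain t where "t \<in> carrier G" "K = H #> t"
      using K by (auto simp: RCOSETS_def)
    then show ?thesis
      using conj_coset g by (simp add: rcosetsI subset)
  qed
  have "H = H #> \<one>"
    using subset by simp
  then have H: "H \<in> rcosets H" "\<forall>g\<in>carrier G. ?\<phi> g H = H"
    using conj_coset[of _ \<one>] rcosetsI[OF subset one_closed] by auto
  obtain K where K: "K \<in> rcosets H" "K \<noteq> H" and fixed: "\<forall>g\<in>carrier G. ?\<phi> g K = K"
    using conj.exists_other_fixed_point[OF ord p fin sub inv dvd H] by blast
  then obtain t where t: "t \<in> carrier G" "K = H #> t"
    by (auto simp: RCOSETS_def)
  moreover have "t \<notin> H"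
    using rcos_const[OF is_group, of t] t K(2) by auto
  moreover have "g <# (H #> t) #> inv g = H #> t" if "g \<in> carrier G" for g
    using fixed that t r_coset_subset_G[OF subset] by auto
  ultimately show ?thesis by blast
qed

lemma (in group) exists_noncentral_with_central_commutators:
  assumes ord: "order G = p ^ n" and p: "Factorial_Ring.prime p" and nc: "\<not> comm_group G"
  shows "\<exists>t\<in>carrier G. t \<notin> center G \<and> (\<forall>g\<in>carrier G. commutator G t g \<in> center G)"
proof -
  interpret Z: normal "center G" G by (rule normal_center)
  have "center G \<noteq> carrier G"
  proof
    assume "center G = carrier G"
    then have "comm_group G"
      using center_commute by (intro group_comm_groupI) auto
    then show False using nc by simp
  qed
  then obtain t where t: "t \<in> carrier G" "t \<notin> center G"
    and fixed: "\<forall>g\<in>carrier G. g <# (center G #> t) #> inv g = center G #> t"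
    using Z.exists_nontrivial_rcoset_fixed_by_conj[OF ord p] by blast
  have "commutator G t g \<in> center G" if g: "g \<in> carrier G" for g
    using Z.commutator_mem_of_conj_rcoset_eq[OF g t(1)] fixed g inv_commutator[OF g t(1)]
      subgroup.m_inv_closed[OF subgroup_center] by metis
  then show ?thesis using t by blast
qed

section \<open>The twisting automorphism\<close>

lemma half_square_mod:
  fixes p q i j :: nat
  assumes q: "2 * q = p + 1"
  shows "(q * ((i + j) mod p) ^ 2) mod p = (i * j + q * i ^ 2 + q * j ^ 2) mod p"
proof -
  have "(q * ((i + j) mod p) ^ 2) mod p = (q * (i + j) ^ 2) mod p"
    by (metis mod_mult_right_eq power_mod)
  also have "q * (i + j) ^ 2 = i * j + q * i ^ 2 + q * j ^ 2 + p * (i * j)"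
  proof -
    have "q * (i + j) ^ 2 = q * i ^ 2 + q * j ^ 2 + (2 * q) * (i * j)"
      by (simp add: power2_eq_square algebra_simps)
    then show ?thesis unfolding q by (simp add: algebra_simps)
  qed
  finally show ?thesis by simp
qed

locale commutator_twist = group G for G (structure) +
  fixes p :: nat and z a :: 'a
  assumes prime: "Factorial_Ring.prime p" and odd: "odd p"
    and z_center: "z \<in> center G" and z_pow_p: "z [^] p = \<one>" and z_ne_one: "z \<noteq> \<one>"
    and a_carrier: "a \<in> carrier G" and a_noncentral: "a \<notin> center G" and a_pow_p: "a [^] p = \<one>"
    and commutator_eq_z_pow: "x \<in> carrier G \<Longrightarrow> \<exists>i::nat. commutator G a x = z [^] i"
begin

definition comm_exp :: "'a \<Rightarrow> nat" where
  "comm_exp x = (SOME i. i < p \<and> commutator G a x = z [^] i)"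

text \<open>Since \<open>a [^] i \<otimes> y = z [^] (i * j) \<otimes> y \<otimes> a [^] i\<close> for \<open>i = comm_exp x\<close> and
  \<open>j = comm_exp y\<close>, the map \<open>x \<mapsto> x \<otimes> a [^] comm_exp x\<close> is multiplicative only up to the
  factor \<open>z [^] (i * j)\<close>. With \<open>half\<close> the inverse of 2 modulo \<open>p\<close>, the extra factor
  \<open>z [^] (half * comm_exp x ^ 2)\<close> absorbs it.\<close>

definition half :: nat where
  "half = (p + 1) div 2"

definition twist :: "nat \<Rightarrow> 'a \<Rightarrow> 'a" where
  "twist k = (\<lambda>x\<in>carrier G. x \<otimes> (a [^] (k * comm_exp x) \<otimes> z [^] (k * half * comm_exp x ^ 2)))"

lemma two_half: "2 * half = p + 1"
  using odd by (simp add: half_def)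

lemma z_carrier [simp]: "z \<in> carrier G"
  using z_center by auto

lemma z_pow_commute: "x \<in> carrier G \<Longrightarrow> z [^] (n::nat) \<otimes> x = x \<otimes> z [^] n"
  using center_commute[OF center_nat_pow_closed[OF z_center]] .

lemma z_pow_left_commute:
  "x \<in> carrier G \<Longrightarrow> y \<in> carrier G \<Longrightarrow> z [^] (n::nat) \<otimes> (x \<otimes> y) = x \<otimes> (z [^] n \<otimes> y)"
  using center_commute_left[OF center_nat_pow_closed[OF z_center]] by simp

lemma ord_z: "ord z = p"
  using pow_eq_id[OF z_carrier, of p] ord_eq_1[OF z_carrier] z_pow_p z_ne_one prime
  by (metis prime_nat_iff)

lemma z_pow_eq_iff: "z [^] (m::nat) = z [^] n \<longleftrightarrow> m mod p = n mod p"
  using pow_eq_iff_mod_ord[OF z_carrier] ord_z by simp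

lemma a_pow_eq: "m mod p = n mod p \<Longrightarrow> a [^] (m::nat) = a [^] n"
  using pow_eq_iff_mod_ord[OF a_carrier] pow_eq_id[OF a_carrier] a_pow_p
  by (metis mod_mod_cancel)

lemma comm_exp_spec:
  assumes "x \<in> carrier G"
  shows "comm_exp x < p" "commutator G a x = z [^] comm_exp x"
proof -
  obtain i :: nat where "commutator G a x = z [^] i"
    using commutator_eq_z_pow[OF assms] by blast
  then have "i mod p < p \<and> commutator G a x = z [^] (i mod p)"
    using prime z_pow_eq_iff by (simp add: prime_gt_0_nat)
  then have "comm_exp x < p \<and> commutator G a x = z [^] comm_exp x"
    unfolding comm_exp_def by (rule someI)
  then show "comm_exp x < p" "commutator G a x = z [^] comm_exp x" by auto
qed

lemma commutator_center: "x \<in> carrier G \<Longrightarrow> commutator G a x \<in> center G"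
  using comm_exp_spec(2) center_nat_pow_closed[OF z_center] by simp

lemma comm_exp_eqI:
  assumes "x \<in> carrier G" "commutator G a x = z [^] i"
  shows "comm_exp x = i mod p"
  using comm_exp_spec[OF assms(1)] assms(2) z_pow_eq_iff by simp

lemma comm_exp_mult:
  assumes x: "x \<in> carrier G" and y: "y \<in> carrier G"
  shows "comm_exp (x \<otimes> y) = (comm_exp x + comm_exp y) mod p"
proof (rule comm_exp_eqI)
  show "commutator G a (x \<otimes> y) = z [^] (comm_exp x + comm_exp y)"
    using commutator_mult_right[OF a_carrier x y commutator_center[OF y]] comm_exp_spec(2) x y
    by (simp add: nat_pow_mult add.commute)
qed (use x y in simp)

lemma comm_exp_mult_commuting:
  assumes "x \<in> carrier G" "w \<in> carrier G" "w \<otimes> a = a \<otimes> w"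
  shows "comm_exp (x \<otimes> w) = comm_exp x"
  using comm_exp_eqI[of "x \<otimes> w"] comm_exp_spec[OF assms(1)] assms
    commutator_mult_commuting_right[OF a_carrier assms]
  by simp

lemma twist_apply:
  "x \<in> carrier G \<Longrightarrow> twist k x = x \<otimes> (a [^] (k * comm_exp x) \<otimes> z [^] (k * half * comm_exp x ^ 2))"
  by (simp add: twist_def)

lemma twist_closed: "x \<in> carrier G \<Longrightarrow> twist k x \<in> carrier G"
  using a_carrier by (simp add: twist_apply)

lemma comm_exp_twist:
  assumes x: "x \<in> carrier G"
  shows "comm_exp (twist k x) = comm_exp x"
proof -
  have "a [^] m \<otimes> z [^] n \<otimes> a = a \<otimes> (a [^] m \<otimes> z [^] n)" for m n :: nat
  proof -
    have "a [^] m \<otimes> z [^] n \<otimes> a = a [^] m \<otimes> a \<otimes> z [^] n"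
      using z_pow_commute[of a n] a_carrier by (simp add: m_assoc)
    also have "a [^] m \<otimes> a = a \<otimes> a [^] m"
      using a_carrier by (metis nat_pow_Suc nat_pow_Suc2)
    finally show ?thesis
      using a_carrier by (simp add: m_assoc)
  qed
  then show ?thesis
    using comm_exp_mult_commuting[OF x] x a_carrier by (simp add: twist_apply)
qed

lemma twist_twist:
  assumes x: "x \<in> carrier G"
  shows "twist k (twist l x) = twist (l + k) x"
proof -
  let ?e = "comm_exp x"
  have "twist k (twist l x)
      = x \<otimes> (a [^] (l * ?e) \<otimes> z [^] (l * half * ?e ^ 2)) \<otimes> (a [^] (k * ?e) \<otimes> z [^] (k * half * ?e ^ 2))"
    using twist_apply[OF twist_closed[OF x], of k] comm_exp_twist[OF x] by (simp add: twist_apply[OF x])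
  also have "\<dots> = x \<otimes> (a [^] (l * ?e) \<otimes> a [^] (k * ?e) \<otimes> (z [^] (l * half * ?e ^ 2) \<otimes> z [^] (k * half * ?e ^ 2)))"
    using x a_carrier z_pow_left_commute[of "a [^] (k * ?e)" "z [^] (k * half * ?e ^ 2)" "l * half * ?e ^ 2"]
    by (simp add: m_assoc)
  also have "\<dots> = twist (l + k) x"
    using x a_carrier by (simp add: twist_apply nat_pow_mult add_mult_distrib)
  finally show ?thesis .
qed

lemma twist_apply_if_dvd:
  assumes "p dvd k" "x \<in> carrier G"
  shows "twist k x = x"
proof -
  have "a [^] (k * comm_exp x) = a [^] (0::nat)"
    by (rule a_pow_eq) (use assms(1) in auto)
  moreover have "z [^] (k * half * comm_exp x ^ 2) = z [^] (0::nat)"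
    unfolding z_pow_eq_iff using assms(1) by auto
  ultimately show ?thesis using assms(2) by (simp add: twist_apply)
qed

lemma twist_bij: "bij_betw (twist k) (carrier G) (carrier G)"
proof (rule bij_betw_byWitness)
  have "k + (p - 1) * k = p * k"
    using prime_gt_0_nat[OF prime] by (metis Suc_diff_1 mult_Suc)
  then have "p dvd k + (p - 1) * k" "p dvd (p - 1) * k + k"
    by (simp_all add: add.commute)
  then show "\<forall>x\<in>carrier G. twist ((p - 1) * k) (twist k x) = x"
    "\<forall>x\<in>carrier G. twist k (twist ((p - 1) * k) x) = x"
    by (simp_all add: twist_twist twist_apply_if_dvd)
qed (auto simp: twist_closed)

lemma twist_in_Bij: "twist k \<in> Bij (carrier G)"
  using twist_bij by (simp add: Bij_def twist_def)

lemma twist_mult: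
  assumes x: "x \<in> carrier G" and y: "y \<in> carrier G"
  shows "twist 1 (x \<otimes> y) = twist 1 x \<otimes> twist 1 y"
proof -
  let ?i = "comm_exp x" and ?j = "comm_exp y"
  let ?A = "half * ?i ^ 2" and ?B = "half * ?j ^ 2"
  have ay: "a [^] ?i \<otimes> y = z [^] (?i * ?j) \<otimes> y \<otimes> a [^] ?i"
    using pow_mult_central_commutator[OF a_carrier y commutator_center[OF y]] comm_exp_spec(2)[OF y]
    by (simp add: nat_pow_pow mult.commute)
  have "twist 1 x \<otimes> twist 1 y = x \<otimes> (a [^] ?i \<otimes> y) \<otimes> a [^] ?j \<otimes> z [^] (?A + ?B)"
    using x y a_carrier z_pow_left_commute[of "y" "a [^] ?j \<otimes> z [^] ?B" ?A]
      z_pow_left_commute[of "a [^] ?j" "z [^] ?B" ?A]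
    by (simp add: twist_apply m_assoc nat_pow_mult)
  also have "\<dots> = x \<otimes> y \<otimes> a [^] (?i + ?j) \<otimes> z [^] (?i * ?j + ?A + ?B)"
    using x y a_carrier z_pow_left_commute[of "y" "a [^] (?i + ?j) \<otimes> z [^] (?A + ?B)" "?i * ?j"]
      z_pow_left_commute[of "a [^] (?i + ?j)" "z [^] (?A + ?B)" "?i * ?j"]
    by (simp add: ay m_assoc nat_pow_mult add.assoc)
  also have "\<dots> = twist 1 (x \<otimes> y)"
  proof -
    have "a [^] (?i + ?j) = a [^] comm_exp (x \<otimes> y)"
      by (rule a_pow_eq) (simp add: comm_exp_mult x y)
    moreover have "z [^] (?i * ?j + ?A + ?B) = z [^] (half * comm_exp (x \<otimes> y) ^ 2)"
      unfolding z_pow_eq_iff comm_exp_mult[OF x y]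
      using half_square_mod[OF two_half] by simp
    ultimately show ?thesis
      using x y a_carrier by (simp add: twist_apply m_assoc)
  qed
  finally show ?thesis by (rule sym)
qed

lemma twist_in_auto: "twist 1 \<in> auto G"
  using twist_in_Bij twist_closed twist_mult by (auto simp: auto_def hom_def Bij_def)

lemma twist_pow: "twist 1 [^]\<^bsub>AutoGroup G\<^esub> k = twist k"
proof (induction k)
  case 0
  show ?case
    by (auto simp: AutoGroup_def BijGroup_def twist_def)
next
  case (Suc k)
  have "twist 1 [^]\<^bsub>AutoGroup G\<^esub> Suc k = compose (carrier G) (twist k) (twist 1)"
    using Suc twist_in_Bij by (simp add: AutoGroup_def BijGroup_def)
  also have "\<dots> = twist (Suc k)"
    by (auto simp: compose_def twist_twist twist_def[of "Suc k"] intro!: restrict_ext)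
  finally show ?case .
qed

lemma twist_eq_one_if_dvd: "p dvd k \<Longrightarrow> twist k = \<one>\<^bsub>AutoGroup G\<^esub>"
  by (auto simp: AutoGroup_def BijGroup_def twist_apply_if_dvd intro!: ext) (simp add: twist_def)

lemma exists_commutator_eq_z: "\<exists>b\<in>carrier G. commutator G a b = z"
proof -
  obtain x where x: "x \<in> carrier G" and nontriv: "commutator G a x \<noteq> \<one>"
    using a_noncentral a_carrier center_iff_commutators_trivial by blast
  let ?e = "comm_exp x"
  have "?e \<noteq> 0" using comm_exp_spec(2)[OF x] nontriv by (metis nat_pow_0)
  moreover have "\<not> p dvd ?e" using comm_exp_spec(1)[OF x] calculation by (auto dest: dvd_imp_le)
  then have "gcd ?e p = 1"
    using prime_imp_coprime_nat[OF prime] by (simp add: coprime_commute coprime_iff_gcd_eq_1)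
  ultimately obtain m y where m: "?e * m = p * y + 1"
    using bezout_nat[of ?e p] by auto
  have "commutator G a (x [^] m) = z [^] (?e * m)"
    using commutator_pow_right[OF a_carrier x commutator_center[OF x]] comm_exp_spec(2)[OF x]
    by (simp add: nat_pow_pow)
  also have "\<dots> = z [^] (1::nat)"
    unfolding z_pow_eq_iff m by (metis add.commute mod_mult_self2)
  finally show ?thesis using x by auto
qed

lemma twist_ne_one: "twist 1 \<noteq> \<one>\<^bsub>AutoGroup G\<^esub>"
proof
  assume one: "twist 1 = \<one>\<^bsub>AutoGroup G\<^esub>"
  obtain b where b: "b \<in> carrier G" "commutator G a b = z"
    using exists_commutator_eq_z by blast
  then have "comm_exp b = 1"
    using comm_exp_eqI[of b 1] prime_gt_1_nat[OF prime] by simp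
  then have "b \<otimes> (a \<otimes> z [^] half) = b"
    using fun_cong[OF one, of b] twist_apply[OF b(1), of 1] b(1) a_carrier
    by (simp add: AutoGroup_def BijGroup_def)
  then have "a \<otimes> z [^] half = \<one>"
    using b(1) a_carrier by simp
  then have "a = inv (z [^] half)"
    using a_carrier by (simp add: inv_equality)
  then show False
    using a_noncentral subgroup.m_inv_closed[OF subgroup_center center_nat_pow_closed[OF z_center]] by simp
qed

lemma ord_twist: "group.ord (AutoGroup G) (twist 1) = p"
proof -
  interpret Aut: group "AutoGroup G" by (rule AutoGroup)
  have twist: "twist 1 \<in> carrier (AutoGroup G)"
    using twist_in_auto by (simp add: AutoGroup_def)
  have "Aut.ord (twist 1) dvd p"
    using Aut.pow_eq_id[OF twist] twist_pow twist_eq_one_if_dvd by simp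
  moreover have "Aut.ord (twist 1) \<noteq> 1"
    using Aut.ord_eq_1[OF twist] twist_ne_one by simp
  ultimately show ?thesis
    using prime by (metis prime_nat_iff)
qed

lemma inner_twist_imp_commutator_eq_z:
  assumes "inner_auto G (twist 1)"
  shows "\<exists>g\<in>carrier G. \<exists>b\<in>carrier G. commutator G (commutator G g b) b = z"
proof -
  obtain g where g: "g \<in> carrier G" and conj: "\<forall>x\<in>carrier G. twist 1 x = g \<otimes> x \<otimes> inv g"
    using assms by (auto simp: inner_auto_def)
  obtain b where b: "b \<in> carrier G" "commutator G a b = z"
    using exists_commutator_eq_z by blast
  let ?w = "a \<otimes> z [^] half"
  have "comm_exp b = 1"
    using comm_exp_eqI[of b 1] b prime_gt_1_nat[OF prime] by simp
  then have "g \<otimes> b \<otimes> inv g = b \<otimes> ?w"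
    using conj[rule_format, OF b(1)] twist_apply[OF b(1), of 1] a_carrier by simp
  then have "commutator G (commutator G g b) b = b \<otimes> commutator G ?w b \<otimes> inv b"
    using commutator_commutator_of_conj_eq g b a_carrier by simp
  also have "\<dots> = b \<otimes> z \<otimes> inv b"
    using commutator_mult_central_left[OF a_carrier b(1) center_nat_pow_closed[OF z_center]] b by simp
  also have "\<dots> = z"
    using b(1) by (simp add: m_assoc flip: center_commute[OF z_center b(1)])
  finally show ?thesis using g b by blast
qed

end

section \<open>\<open>\<Omega>\<^sub>1(Z(G))\<close>, \<open>\<gamma>\<^sub>3(G)\<close> and \<open>G\<^sup>p\<close>\<close>

context group
begin

lemma Omega1_center_subset: "Omega1 G p (center G) \<subseteq> {x \<in> center G. x [^] p = \<one>}"
  unfolding Omega1_def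
proof (rule generate_subgroup_incl)
  show "subgroup {x \<in> center G. x [^] p = \<one>} G"
  proof (rule subgroupI)
    fix x y assume x: "x \<in> {x \<in> center G. x [^] p = \<one>}" and y: "y \<in> {x \<in> center G. x [^] p = \<one>}"
    then have "(x \<otimes> y) [^] p = x [^] p \<otimes> y [^] p"
      by (intro pow_mult_distrib center_commute) auto
    then show "x \<otimes> y \<in> {x \<in> center G. x [^] p = \<one>}"
      using x y subgroup.m_closed[OF subgroup_center] by auto
    show "inv x \<in> {x \<in> center G. x [^] p = \<one>}"
      using x subgroup.m_inv_closed[OF subgroup_center] by (auto simp: nat_pow_inv)
  qed (use center_subset_carrier subgroup.one_closed[OF subgroup_center] in auto)
qed auto

lemma pow_mem_power_subgroup: "g \<in> carrier G \<Longrightarrow> g [^] p \<in> power_subgroup G p"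
  unfolding power_subgroup_def by (rule generate.incl) blast

lemma one_mem_power_subgroup: "\<one> \<in> power_subgroup G p"
  unfolding power_subgroup_def by (rule generate.one)

lemma lower_central_3: "lower_central G 3 = comm_subgroup G (comm_subgroup G (carrier G) (carrier G)) (carrier G)"
  by (simp add: numeral_3_eq_3)

lemma commutator_commutator_mem_lower_central_3:
  assumes "g \<in> carrier G" "b \<in> carrier G"
  shows "commutator G (commutator G g b) b \<in> lower_central G 3"
proof -
  have "commutator G g b \<in> comm_subgroup G (carrier G) (carrier G)"
    unfolding comm_subgroup_def commutator_def using assms by (intro generate.incl) blast
  then show ?thesis
    unfolding lower_central_3 comm_subgroup_def commutator_def[of G "commutator G g b"]
    using assms by (intro generate.incl) blast
qed

lemma one_mem_lower_central_3: "\<one> \<in> lower_central G 3"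
  unfolding lower_central_3 comm_subgroup_def by (rule generate.one)

lemma center_eq_powers_of_non_pth_power:
  assumes cyc: "cyclic_group (subgroup_generated G (center G))"
    and ord: "order G = p ^ n" and p: "Factorial_Ring.prime p"
    and z: "z \<in> center G" "z \<notin> power_subgroup G p"
  shows "\<forall>y\<in>center G. \<exists>i::nat. y = z [^] i"
  using center_pth_power_or_generator[OF cyc ord p z(1)] z(2) pow_mem_power_subgroup by auto

lemma central_pth_power_eq_one:
  assumes cyc: "cyclic_group (subgroup_generated G (center G))"
    and ord: "order G = p ^ n" and p: "Factorial_Ring.prime p"
    and z: "z \<in> center G" "z \<notin> power_subgroup G p"
    and center_exp: "\<forall>c\<in>center G. c [^] p = \<one>"
    and t: "t \<in> carrier G" "t [^] p \<in> center G"
  shows "t [^] p = \<one>"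
  using center_pth_power_or_generator[OF cyc ord p t(2)]
proof
  assume "\<exists>c\<in>center G. t [^] p = c [^] p"
  then show ?thesis using center_exp by auto
next
  assume "\<forall>y\<in>center G. \<exists>i::nat. y = (t [^] p) [^] i"
  then obtain i :: nat where "z = (t [^] p) [^] i" using z(1) by blast
  then have "z = (t [^] i) [^] p" using t(1) by (simp add: nat_pow_pow mult.commute)
  then show ?thesis using z(2) pow_mem_power_subgroup t(1) by auto
qed

lemma exists_commutator_twist:
  assumes p: "Factorial_Ring.prime p" "odd p" and ord: "order G = p ^ n"
    and nc: "\<not> comm_group G" and cyc: "cyclic_group (subgroup_generated G (center G))"
    and Omega1: "\<not> Omega1 G p (center G) \<subseteq> lower_central G 3 <#> power_subgroup G p"
  obtains z t where "commutator_twist G p z t" "z \<notin> lower_central G 3"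
proof -
  obtain z where "z \<in> Omega1 G p (center G)"
    and z_N: "z \<notin> lower_central G 3 <#> power_subgroup G p"
    using Omega1 by blast
  then have z: "z \<in> center G" "z [^] p = \<one>"
    using Omega1_center_subset by auto
  then have z_not_power: "z \<notin> power_subgroup G p" and z_not_\<gamma>3: "z \<notin> lower_central G 3"
    using z_N one_mem_power_subgroup one_mem_lower_central_3 by (force simp: set_mult_def)+
  have center_powers: "\<forall>y\<in>center G. \<exists>i::nat. y = z [^] i"
    by (rule center_eq_powers_of_non_pth_power[OF cyc ord p(1) z(1) z_not_power])
  have center_exp: "\<forall>c\<in>center G. c [^] p = \<one>"
  proof
    fix c assume "c \<in> center G"
    then obtain i :: nat where "c = z [^] i" using center_powers by blast
    then have "c [^] p = (z [^] p) [^] i"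
      using z(1) by (auto simp: nat_pow_pow mult.commute)
    then show "c [^] p = \<one>" using z(2) by simp
  qed
  obtain t where t: "t \<in> carrier G" "t \<notin> center G"
    and comm: "\<forall>g\<in>carrier G. commutator G t g \<in> center G"
    using exists_noncentral_with_central_commutators[OF ord p(1) nc] by blast
  have "t [^] p = \<one>"
    using central_pth_power_eq_one[OF cyc ord p(1) z(1) z_not_power center_exp t(1)]
      pow_mem_center_of_central_commutators[OF t(1) comm center_exp] by blast
  moreover have "z \<noteq> \<one>"
    using z_not_power one_mem_power_subgroup by auto
  ultimately have "commutator_twist G p z t"
    using p z t comm center_powers by unfold_locales auto
  then show ?thesis using z_not_\<gamma>3 that by blast
qed

end

theorem lemma4p1:
  fixes G :: "('a, 'b) monoid_scheme" and p :: nat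
  assumes "group G"
    and "Factorial_Ring.prime p" and "odd p"
    and "finite (carrier G)"
    and "\<exists>n::nat. order G = p ^ n"
    and "\<not> comm_group G"
    and "cyclic_group (subgroup_generated G (center G))"
    and "\<not> Omega1 G p (center G) \<subseteq> lower_central G 3 <#>\<^bsub>G\<^esub> power_subgroup G p"
  shows "\<exists>\<phi> \<in> auto G. group.ord (AutoGroup G) \<phi> = p \<and> \<not> inner_auto G \<phi>"
proof -
  obtain n where "order G = p ^ n" using assms(5) ..
  then obtain z t where "commutator_twist G p z t" and z: "z \<notin> lower_central G 3"
    using group.exists_commutator_twist[OF assms(1-3) _ assms(6-8)] by blast
  interpret commutator_twist G p z t by fact
  show ?thesis
    using twist_in_auto ord_twist inner_twist_imp_commutator_eq_z
      commutator_commutator_mem_lower_central_3 z by metis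
qed

end
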